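(* For every positive integer $n$, let $$U(n)=2\left\lfloor\frac{2^n}{2(n+1)}\right\rfloor,\qquad r(n)=2^n-(n+1)U(n),\qquad M_{\rm ad}(n)=\begin{cases}U(n)&\text{if } r(n)<2n,\\ U(n)+1 & \text{if } r(n)\ge 2n.\end{cases}$$ Then in the binary symmetric channel with two feedbacks and a single error, $M_{\rm ad}(n)$ messages can be transmitted with a strategy of length $n$.
   Context: Binary symmetric channel: alphabet $\{0,1\}$, an error replaces a symbol by the other symbol; "a single error" means at most one error during the whole transmission. A strategy of length $n$ with $k$ feedbacks: $n=n_1+\cdots+n_{k+1}$; for a message $m\in[M]$, the first $n_1$ symbols depend only on $m$; after $N_{i-1}=n_1+\cdots+n_{i-1}$ symbols have been sent ($i\ge2$), the encoder knows (error-free, instantaneously) the $N_{i-1}$ received symbols, and the $i$th block of $n_i$ symbols is a function of $m$ and these received symbols. The strategy transmits $M$ messages with a single error if the sets of output sequences reachable from distinct messages with at most one error are pairwise disjoint. *)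

theory Defs
  imports Main
begin

text \<open>A strategy with k feedbacks is given by
  a list bl of k+1 block lengths n_1,...,n_{k+1} (total length n = sum_list bl) and an encoder
  enc m p j: the symbol sent at position j (0-based) for message m, given the received prefix p.
  The encoder is only ever queried with p = the received symbols before the start of the
  block containing position j, so block i is a function of m and the N_{i-1} received symbols.\<close>

definition block_start :: "nat list \<Rightarrow> nat \<Rightarrow> nat" where
  "block_start bl j = Max {sum_list (take i bl) | i. i \<le> length bl \<and> sum_list (take i bl) \<le> j}"

definition reachable1 :: "nat list \<Rightarrow> (nat \<Rightarrow> bool list \<Rightarrow> nat \<Rightarrow> bool) \<Rightarrow> nat \<Rightarrow> bool list \<Rightarrow> bool" where
  "reachable1 bl enc m y \<longleftrightarrow>
     length y = sum_list bl \<and>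
     card {j. j < length y \<and> y ! j \<noteq> enc m (take (block_start bl j) y) j} \<le> 1"

definition transmits_single_error ::
  "nat list \<Rightarrow> (nat \<Rightarrow> bool list \<Rightarrow> nat \<Rightarrow> bool) \<Rightarrow> nat \<Rightarrow> bool" where
  "transmits_single_error bl enc M \<longleftrightarrow>
     (\<forall>m1 < M. \<forall>m2 < M. m1 \<noteq> m2 \<longrightarrow>
        \<not> (\<exists>y. reachable1 bl enc m1 y \<and> reachable1 bl enc m2 y))"

definition U :: "nat \<Rightarrow> nat" where
  "U n = 2 * (2 ^ n div (2 * (n + 1)))"


definition rr :: "nat \<Rightarrow> int" where
  "rr n = 2 ^ n - int (n + 1) * int (U n)"

definition M_ad :: "nat \<Rightarrow> nat" where
  "M_ad n = (if rr n < 2 * int n then U n else U n + 1)"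

end

theory Submission
  imports Defs "HOL-Library.Disjoint_Sets"
begin

(* The first symbol tells whether m < M div 2. Once it is received, the messages split into a set A
  that may still suffer the error and a set B whose error has already occurred. The second block
  maps A injectively into pairs (word of length n2, index below K) and sends each message of B to a
  word whose third block still has room. After the second block is received, the third block sends
  the words of a single-error-correcting code of size K to the messages of A whose second block
  arrived intact, and pairwise distinct words outside the balls around these codewords to all
  other surviving messages. Counting volumes, everything fits as soon as
  ceil(M/2) n + floor(M/2) <= 2^(n-1), and the definition of M_ad guarantees exactly this. The
  codes come from Varshamov-Tenengolts residue classes for large n and are given explicitly for a
  few small n. *)

section \<open>Hamming distance\<close>

(* Only meaningful for lists of equal length: the tail of the longer list is ignored. *)
fun hamming_dist :: "'a list \<Rightarrow> 'a list \<Rightarrow> nat" where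
  "hamming_dist (x # xs) (y # ys) = (if x = y then 0 else 1) + hamming_dist xs ys"
| "hamming_dist _ _ = 0"

lemma hamming_dist_append:
  "length a = length b \<Longrightarrow> hamming_dist (a @ c) (b @ d) = hamming_dist a b + hamming_dist c d"
  by (induction a b rule: list_induct2) auto

lemma hamming_dist_commute: "hamming_dist x y = hamming_dist y x"
  by (induction x y rule: hamming_dist.induct) auto

lemma hamming_dist_self [simp]: "hamming_dist x x = 0"
  by (induction x) auto

lemma hamming_dist_eq_0_iff: "length x = length y \<Longrightarrow> hamming_dist x y = 0 \<longleftrightarrow> x = y"
  by (induction x y rule: list_induct2) auto

lemma hamming_dist_triangle:
  "length x = length y \<Longrightarrow> length y = length z \<Longrightarrow>
    hamming_dist x z \<le> hamming_dist x y + hamming_dist y z"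
proof (induction x y arbitrary: z rule: list_induct2)
  case Nil
  then show ?case by simp
next
  case (Cons a x b y)
  then obtain c z' where "z = c # z'" "length y = length z'"
    by (cases z) auto
  with Cons show ?case by fastforce
qed

lemma hamming_dist_conv_card:
  assumes "length x = length y"
  shows "hamming_dist x y = card {j. j < length x \<and> x ! j \<noteq> y ! j}"
proof -
  from assms have "hamming_dist x y = (\<Sum>j<length x. if x ! j \<noteq> y ! j then 1 else 0)"
    by (induction x y rule: list_induct2) (simp_all add: sum.lessThan_Suc_shift del: sum.lessThan_Suc)
  also have "\<dots> = card {j \<in> {..<length x}. x ! j \<noteq> y ! j}"
    by (simp add: sum.inter_filter[symmetric])
  finally show ?thesis
    by (simp add: lessThan_def)
qed

definition words :: "nat \<Rightarrow> bool list set" where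
  "words n = {x. length x = n}"

lemma finite_words [simp]: "finite (words n)"
  using finite_lists_length_eq[of "UNIV :: bool set" n] by (simp add: words_def)

lemma card_words: "card (words n) = 2 ^ n"
  using card_lists_length_eq[of "UNIV :: bool set" n] by (simp add: words_def)

definition hamming_ball1 :: "'a list \<Rightarrow> 'a list set" where
  "hamming_ball1 c = {y. length y = length c \<and> hamming_dist y c \<le> 1}"

definition hamming_sphere1 :: "'a list \<Rightarrow> 'a list set" where
  "hamming_sphere1 c = {y. length y = length c \<and> hamming_dist y c = 1}"

lemma hamming_sphere1_eq: "hamming_sphere1 c = hamming_ball1 c - {c}"
  by (auto simp: hamming_sphere1_def hamming_ball1_def hamming_dist_eq_0_iff
      dest: le_neq_implies_less)

lemma hamming_ball1_Cons: "hamming_ball1 (a # c) = (#) a ` hamming_ball1 c \<union> {(\<not> a) # c}"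
proof (rule set_eqI)
  fix y
  show "y \<in> hamming_ball1 (a # c) \<longleftrightarrow> y \<in> (#) a ` hamming_ball1 c \<union> {(\<not> a) # c}"
    by (cases y) (auto simp: hamming_ball1_def hamming_dist_eq_0_iff)
qed

lemma hamming_ball1_subset_words: "hamming_ball1 c \<subseteq> words (length c)"
  by (auto simp: hamming_ball1_def words_def)

lemma finite_hamming_ball1 [simp]: "finite (hamming_ball1 (c :: bool list))"
  by (rule finite_subset[OF hamming_ball1_subset_words]) simp

lemma card_hamming_ball1: "card (hamming_ball1 (c :: bool list)) = length c + 1"
proof (induction c)
  case Nil
  have "hamming_ball1 [] = {[] :: bool list}"
    by (auto simp: hamming_ball1_def)
  then show ?case by simp
next
  case (Cons a c)
  have "card ((#) a ` hamming_ball1 c) = card (hamming_ball1 c)"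
    by (rule card_image) simp
  moreover have "(\<not> a) # c \<notin> (#) a ` hamming_ball1 c"
    by auto
  ultimately show ?case
    using Cons by (simp add: hamming_ball1_Cons)
qed

lemma card_hamming_sphere1: "card (hamming_sphere1 (c :: bool list)) = length c"
proof -
  have "c \<in> hamming_ball1 c"
    by (simp add: hamming_ball1_def)
  then show ?thesis
    by (simp add: hamming_sphere1_eq card_hamming_ball1)
qed

lemma disjoint_hamming_ball1:
  assumes "3 \<le> hamming_dist c d"
  shows "hamming_ball1 c \<inter> hamming_ball1 d = {}"
proof (rule ccontr)
  assume "hamming_ball1 c \<inter> hamming_ball1 d \<noteq> {}"
  then obtain y where y: "y \<in> hamming_ball1 c" "y \<in> hamming_ball1 d"
    by blast
  then have "hamming_dist c d \<le> hamming_dist c y + hamming_dist y d"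
    by (intro hamming_dist_triangle) (auto simp: hamming_ball1_def)
  moreover have "hamming_dist c y \<le> 1" "hamming_dist y d \<le> 1"
    using y by (simp_all add: hamming_ball1_def hamming_dist_commute[of c])
  ultimately show False
    using assms by linarith
qed

section \<open>Single-error-correcting codes\<close>

definition single_error_correcting :: "nat \<Rightarrow> bool list set \<Rightarrow> bool" where
  "single_error_correcting t C \<longleftrightarrow>
     C \<subseteq> words t \<and> (\<forall>c\<in>C. \<forall>d\<in>C. c \<noteq> d \<longrightarrow> 3 \<le> hamming_dist c d)"

lemma single_error_correcting_subset:
  "single_error_correcting t C \<Longrightarrow> D \<subseteq> C \<Longrightarrow> single_error_correcting t D"
  by (auto simp: single_error_correcting_def)

lemma finite_single_error_correcting: "single_error_correcting t C \<Longrightarrow> finite C"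
  unfolding single_error_correcting_def using finite_words finite_subset by blast

lemma card_UN_hamming_ball1:
  assumes "single_error_correcting t C"
  shows "card (\<Union>c\<in>C. hamming_ball1 c) = card C * (t + 1)"
proof -
  have "card (\<Union>c\<in>C. hamming_ball1 c) = (\<Sum>c\<in>C. card (hamming_ball1 c))"
    using assms finite_single_error_correcting
    by (intro card_UN_disjoint) (auto simp: single_error_correcting_def disjoint_hamming_ball1)
  also have "\<dots> = (\<Sum>c\<in>C. t + 1)"
    using assms by (intro sum.cong) (auto simp: single_error_correcting_def words_def card_hamming_ball1)
  finally show ?thesis
    by simp
qed

lemma single_error_correcting_set:
  assumes "sorted_wrt (\<lambda>c d. 3 \<le> hamming_dist c d) cs" "\<forall>c\<in>set cs. length c = t"
  shows "single_error_correcting t (set cs) \<and> card (set cs) = length cs"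
  using assms
proof (induction cs)
  case Nil
  then show ?case
    by (simp add: single_error_correcting_def)
next
  case (Cons c cs)
  then have "c \<notin> set cs"
    by fastforce
  with Cons show ?case
    by (auto simp: single_error_correcting_def words_def hamming_dist_commute)
qed

(* Varshamov-Tenengolts weight: a one at position j of a list of length L weighs L - j. One or two
  flips change it by a nonzero amount below 2 L, so words of equal weight modulo 2 L are at
  distance at least 3. *)
fun vt_weight :: "bool list \<Rightarrow> nat" where
  "vt_weight [] = 0"
| "vt_weight (a # z) = (if a then length z + 1 else 0) + vt_weight z"

lemma vt_weight_diff_dist1:
  "length x = length y \<Longrightarrow> hamming_dist x y = 1 \<Longrightarrow>
    1 \<le> \<bar>int (vt_weight x) - int (vt_weight y)\<bar> \<and>
    \<bar>int (vt_weight x) - int (vt_weight y)\<bar> \<le> int (length x)"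
proof (induction x y rule: list_induct2)
  case (Cons a x b y)
  then show ?case
    by (cases "a = b") (auto simp: hamming_dist_eq_0_iff)
qed simp

lemma vt_weight_diff_dist2:
  "length x = length y \<Longrightarrow> hamming_dist x y = 2 \<Longrightarrow>
    1 \<le> \<bar>int (vt_weight x) - int (vt_weight y)\<bar> \<and>
    \<bar>int (vt_weight x) - int (vt_weight y)\<bar> \<le> 2 * int (length x) - 1"
proof (induction x y rule: list_induct2)
  case (Cons a x b y)
  with vt_weight_diff_dist1[of x y] show ?case
    by (cases "a = b") (auto split: if_splits)
qed simp

lemma vt_weight_mod_imp_dist:
  assumes "length x = t" "length y = t" "x \<noteq> y"
    and "vt_weight x mod (2 * t) = vt_weight y mod (2 * t)"
  shows "3 \<le> hamming_dist x y"
proof (rule ccontr)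
  define d where "d = int (vt_weight x) - int (vt_weight y)"
  assume "\<not> 3 \<le> hamming_dist x y"
  moreover have "hamming_dist x y \<noteq> 0"
    using assms hamming_dist_eq_0_iff by metis
  ultimately have "hamming_dist x y = 1 \<or> hamming_dist x y = 2"
    by auto
  then have d: "1 \<le> \<bar>d\<bar>" "\<bar>d\<bar> \<le> 2 * int t - 1"
    using vt_weight_diff_dist1[of x y] vt_weight_diff_dist2[of x y] assms
    unfolding d_def by auto
  have "int (vt_weight x) mod (2 * int t) = int (vt_weight y) mod (2 * int t)"
    using assms(4) by (metis of_nat_mod of_nat_mult of_nat_numeral)
  then have "2 * int t dvd d"
    unfolding d_def by (simp add: mod_eq_dvd_iff)
  then have "\<bar>2 * int t\<bar> \<le> \<bar>d\<bar>"
    using d by (intro dvd_imp_le_int) auto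
  with d show False
    by simp
qed

lemma exists_vt_code:
  assumes "t \<ge> 1"
  shows "\<exists>C. single_error_correcting t C \<and> 2 ^ t \<le> 2 * t * card C"
proof -
  define p where "p = 2 * t"
  define weight_class where "weight_class r = {z \<in> words t. vt_weight z mod p = r}" for r
  have p: "p > 0"
    using assms by (simp add: p_def)
  have "(\<Sum>r<p. card (weight_class r)) = card (words t)"
    unfolding weight_class_def card_eq_sum using p by (intro sum.group) auto
  then have sum_class: "(\<Sum>r<p. p * card (weight_class r)) = p * 2 ^ t"
    by (simp add: sum_distrib_left[symmetric] card_words)
  have "\<exists>r. 2 ^ t \<le> p * card (weight_class r)"
  proof (rule ccontr)
    assume "\<nexists>r. 2 ^ t \<le> p * card (weight_class r)"
    then have "(\<Sum>r<p. p * card (weight_class r)) < (\<Sum>r<p. 2 ^ t)"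
      using p by (intro sum_strict_mono) (auto simp: not_le)
    with sum_class show False
      by simp
  qed
  then obtain r where r: "2 ^ t \<le> p * card (weight_class r)"
    by blast
  have "single_error_correcting t (weight_class r)"
    by (auto simp: single_error_correcting_def weight_class_def words_def p_def intro: vt_weight_mod_imp_dist)
  with r show ?thesis
    by (auto simp: p_def)
qed

(* For n = 9, 11 and 13 the size guaranteed by exists_vt_code is too small, so explicit codes are
  used there. *)
definition code6 :: "bool list list" where
  "code6 = [[False,True,True,True,False,True],[True,False,False,False,False,True],
    [False,False,True,False,True,True],[True,True,False,True,True,True],
    [True,False,True,True,False,False],[True,True,True,False,True,False],
    [False,False,False,True,True,False]]"

lemma single_error_correcting_code6: "single_error_correcting 6 (set code6) \<and> card (set code6) = 7"
proof -
  have "single_error_correcting 6 (set code6) \<and> card (set code6) = length code6"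
    by (rule single_error_correcting_set) (simp_all add: code6_def)
  moreover have "length code6 = 7"
    by (simp add: code6_def)
  ultimately show ?thesis
    by simp
qed

definition code7 :: "bool list list" where
  "code7 = [[False,True,False,False,False,False,False],
    [True,True,True,False,True,False,True],
    [True,False,True,True,True,True,True],
    [False,False,True,False,False,True,True],
    [True,False,True,True,False,False,False],
    [False,True,True,False,True,True,False],
    [True,True,False,False,False,True,True],
    [True,False,False,False,True,True,False],
    [False,True,False,True,True,True,True],
    [False,False,False,False,True,False,True],
    [False,False,False,True,False,True,False]]"

lemma single_error_correcting_code7: "single_error_correcting 7 (set code7) \<and> card (set code7) = 11"
proof -
  have "single_error_correcting 7 (set code7) \<and> card (set code7) = length code7"
    by (rule single_error_correcting_set) (simp_all add: code7_def)
  moreover have "length code7 = 11"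
    by (simp add: code7_def)
  ultimately show ?thesis
    by simp
qed

definition code8 :: "bool list list" where
  "code8 = [[False,True,True,False,False,True,True,True],
    [True,True,False,False,True,True,False,False],
    [False,False,True,True,True,False,False,True],
    [True,False,True,False,True,True,True,True],
    [True,False,False,True,False,False,False,False],
    [True,True,True,False,True,False,False,True],
    [False,True,False,False,True,False,True,True],
    [True,False,True,True,True,True,False,False],
    [False,False,True,False,False,True,False,False],
    [False,False,False,True,False,True,True,True],
    [True,True,True,False,False,False,True,False],
    [True,True,True,True,False,True,False,True],
    [True,True,False,True,True,True,True,True],
    [False,True,True,True,False,False,False,False],
    [True,False,False,False,False,True,True,False],
    [False,True,True,True,True,True,True,False],
    [True,False,True,True,False,False,True,True],
    [False,False,False,False,True,True,False,True],
    [False,False,True,False,True,False,True,False]]"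

lemma single_error_correcting_code8: "single_error_correcting 8 (set code8) \<and> card (set code8) = 19"
proof -
  have "single_error_correcting 8 (set code8) \<and> card (set code8) = length code8"
    by (rule single_error_correcting_set) (simp_all add: code8_def)
  moreover have "length code8 = 19"
    by (simp add: code8_def)
  ultimately show ?thesis
    by simp
qed

section \<open>Packing the last two blocks\<close>

(* A: messages that may still suffer one error; B: messages whose error has already occurred. *)
definition received1 :: "'m set \<Rightarrow> 'm set \<Rightarrow> ('m \<Rightarrow> bool list) \<Rightarrow> 'm \<Rightarrow> bool list set" where
  "received1 A B c m = (if m \<in> A then hamming_ball1 (c m) else if m \<in> B then {c m} else {})"

lemma one_block_packing:
  fixes A B :: "'m set"
  assumes "finite A" "finite B" and code: "single_error_correcting t C" "card A \<le> card C"
    and volume: "card A * (t + 1) + card B \<le> 2 ^ t"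
  shows "\<exists>c. (\<forall>m. length (c m) = t) \<and> disjoint_family_on (received1 A B c) UNIV"
proof -
  obtain p where p: "p ` A \<subseteq> C" "inj_on p A"
    using card_le_inj[OF \<open>finite A\<close> finite_single_error_correcting[OF code(1)] code(2)] by blast
  have p_code: "single_error_correcting t (p ` A)"
    using code(1) p(1) by (rule single_error_correcting_subset)
  define balls where "balls = (\<Union>m\<in>A. hamming_ball1 (p m))"
  have "balls \<subseteq> words t"
    using p_code hamming_ball1_subset_words
    by (fastforce simp: balls_def single_error_correcting_def words_def)
  moreover have "card balls = card A * (t + 1)"
    using card_UN_hamming_ball1[OF p_code] card_image[OF p(2)] by (simp add: balls_def)
  ultimately have "card (words t - balls) = 2 ^ t - card A * (t + 1)"
    by (simp add: card_Diff_subset finite_subset card_words)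
  with volume have "card B \<le> card (words t - balls)"
    by simp
  then obtain q where q: "q ` B \<subseteq> words t - balls" "inj_on q B"
    using card_le_inj[OF \<open>finite B\<close>, of "words t - balls"] by auto
  define c where "c m = (if m \<in> A then p m else if m \<in> B then q m else replicate t False)" for m
  have "length (c m) = t" for m
    using p_code p(1) q(1) by (auto simp: c_def single_error_correcting_def words_def)
  moreover have "received1 A B c m1 \<inter> received1 A B c m2 = {}" if "m1 \<noteq> m2" for m1 m2
  proof -
    have "3 \<le> hamming_dist (p m1) (p m2)" if "m1 \<in> A" "m2 \<in> A"
      using p_code that inj_on_contraD[OF p(2) \<open>m1 \<noteq> m2\<close> that]
      by (auto simp: single_error_correcting_def)
    moreover have "q m2 \<notin> hamming_ball1 (p m1)" if "m1 \<in> A" "m2 \<in> B"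
      using q(1) that by (auto simp: balls_def)
    moreover have "q m1 \<notin> hamming_ball1 (p m2)" if "m2 \<in> A" "m1 \<in> B"
      using q(1) that by (auto simp: balls_def)
    moreover have "q m1 \<noteq> q m2" if "m1 \<in> B" "m2 \<in> B"
      using q(2) \<open>m1 \<noteq> m2\<close> that by (auto simp: inj_on_def)
    ultimately show ?thesis
      by (auto simp: received1_def c_def dest: disjoint_hamming_ball1)
  qed
  ultimately show ?thesis
    by (auto simp: disjoint_family_on_def)
qed

lemma sum_card_fibres:
  assumes "finite A" "finite Y" "h ` A \<subseteq> Y"
  shows "(\<Sum>y\<in>Y. card {m \<in> A. h m = y}) = card A"
  unfolding card_eq_sum using assms by (rule sum.group)

lemma card_fibre_le:
  assumes "inj_on f A" "f ` A \<subseteq> Sigma Y S" "finite (S y)"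
  shows "card {m \<in> A. fst (f m) = y} \<le> card (S y)"
proof -
  have "card {m \<in> A. fst (f m) = y} \<le> card ({y} \<times> S y)"
    using assms by (intro card_inj_on_le[of f]) (auto intro: inj_on_subset)
  then show ?thesis
    by (simp add: card_cartesian_product_singleton)
qed

lemma sum_card_sphere_fibres:
  assumes "finite A" "h ` A \<subseteq> words n"
  shows "(\<Sum>u\<in>words n. card {m \<in> A. h m \<in> hamming_sphere1 u}) = n * card A"
proof -
  have sphere_sym: "{u \<in> words n. h m \<in> hamming_sphere1 u} = hamming_sphere1 (h m)" if "m \<in> A" for m
    using assms(2) that by (auto simp: hamming_sphere1_def words_def hamming_dist_commute)
  have "(\<Sum>u\<in>words n. card {m \<in> A. h m \<in> hamming_sphere1 u})
      = (\<Sum>u\<in>words n. \<Sum>m\<in>A. if h m \<in> hamming_sphere1 u then 1 else 0)"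
    using assms(1) by (simp add: sum.inter_filter[symmetric])
  also have "\<dots> = (\<Sum>m\<in>A. \<Sum>u\<in>words n. if h m \<in> hamming_sphere1 u then 1 else 0)"
    by (rule sum.swap)
  also have "\<dots> = (\<Sum>m\<in>A. card (hamming_sphere1 (h m)))"
    by (intro sum.cong refl) (simp add: sum.inter_filter[symmetric] sphere_sym)
  also have "\<dots> = n * card A"
    using assms(2) by (simp add: card_hamming_sphere1 words_def image_subset_iff)
  finally show ?thesis .
qed

lemma card_sphere_fibres_le:
  assumes "\<And>v. card {m \<in> A. h m = v} \<le> K" "u \<in> words n"
  shows "card {m \<in> A. h m \<in> hamming_sphere1 u} \<le> n * K"
proof -
  have "{m \<in> A. h m \<in> hamming_sphere1 u} = (\<Union>v\<in>hamming_sphere1 u. {m \<in> A. h m = v})"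
    by auto
  then have "card {m \<in> A. h m \<in> hamming_sphere1 u} \<le> (\<Sum>v\<in>hamming_sphere1 u. card {m \<in> A. h m = v})"
    by (simp add: card_UN_le hamming_sphere1_eq)
  also have "\<dots> \<le> (\<Sum>v\<in>hamming_sphere1 u. K)"
    by (intro sum_mono assms(1))
  finally show ?thesis
    using assms(2) by (simp add: card_hamming_sphere1 words_def)
qed

lemma sum_free_capacity:
  assumes "finite A" "h ` A \<subseteq> words n"
    and room: "\<And>u. u \<in> words n \<Longrightarrow>
      card {m \<in> A. h m = u} * (t + 1) + card {m \<in> A. h m \<in> hamming_sphere1 u} \<le> 2 ^ t"
  shows "(\<Sum>u\<in>words n. 2 ^ t - card {m \<in> A. h m = u} * (t + 1) - card {m \<in> A. h m \<in> hamming_sphere1 u})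
    + card A * (n + t + 1) = 2 ^ (n + t)"
proof -
  define used where
    "used u = card {m \<in> A. h m = u} * (t + 1) + card {m \<in> A. h m \<in> hamming_sphere1 u}" for u
  have "(\<Sum>u\<in>words n. (2 ^ t - used u) + used u) = (\<Sum>u\<in>words n. 2 ^ t)"
    using room by (intro sum.cong) (auto simp: used_def)
  moreover have "(\<Sum>u\<in>words n. used u) = card A * (t + 1) + n * card A"
    unfolding used_def sum.distrib sum_distrib_right[symmetric]
    using sum_card_fibres[OF assms(1) finite_words assms(2)] sum_card_sphere_fibres[OF assms(1,2)]
    by simp
  ultimately show ?thesis
    unfolding used_def sum.distrib by (simp add: card_words power_add algebra_simps)
qed

lemma middle_block_assignment:
  fixes A B :: "'m set"
  assumes "finite A" "finite B" "A \<inter> B = {}"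
    and fibres: "card A \<le> 2 ^ n * K" and load: "K * (n + t + 1) \<le> 2 ^ t"
    and volume: "card A * (n + t + 1) + card B \<le> 2 ^ (n + t)"
  shows "\<exists>c. (\<forall>m. length (c m) = n) \<and> (\<forall>y\<in>words n. card {m \<in> A. c m = y} \<le> K \<and>
    card {m \<in> A. c m = y} * (t + 1) + card ({m \<in> A. c m \<in> hamming_sphere1 y} \<union> {m \<in> B. c m = y})
      \<le> 2 ^ t)"
proof -
  obtain f where f: "f ` A \<subseteq> words n \<times> {..<K}" "inj_on f A"
    using card_le_inj[OF \<open>finite A\<close>, of "words n \<times> {..<K}"] fibres
    by (auto simp: card_cartesian_product card_words)
  define clean where "clean u = {m \<in> A. fst (f m) = u}" for u
  define nbrs where "nbrs u = {m \<in> A. fst (f m) \<in> hamming_sphere1 u}" for u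
  have clean_le: "card (clean u) \<le> K" for u
    using card_fibre_le[OF f(2) f(1)] by (simp add: clean_def)
  have room: "card (clean u) * (t + 1) + card (nbrs u) \<le> 2 ^ t" if "u \<in> words n" for u
  proof -
    have "card (nbrs u) \<le> n * K"
      using card_sphere_fibres_le[of A "fst \<circ> f" K u n] clean_le that by (simp add: clean_def nbrs_def)
    with clean_le[of u] have "card (clean u) * (t + 1) + card (nbrs u) \<le> K * (t + 1) + n * K"
      by (intro add_mono mult_le_mono1)
    with load show ?thesis
      by (simp add: algebra_simps)
  qed
  define cap where "cap u = 2 ^ t - card (clean u) * (t + 1) - card (nbrs u)" for u
  have "card B \<le> (\<Sum>u\<in>words n. cap u)"
    using sum_free_capacity[of A "fst \<circ> f" n t] f(1) room volume \<open>finite A\<close>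
    unfolding cap_def clean_def nbrs_def by fastforce
  then obtain g where g: "g ` B \<subseteq> (SIGMA u:words n. {..<cap u})" "inj_on g B"
    using card_le_inj[OF \<open>finite B\<close>, of "SIGMA u:words n. {..<cap u}"] by auto
  define c where "c m = (if m \<in> A then fst (f m) else if m \<in> B then fst (g m) else replicate n False)"
    for m
  have "length (c m) = n" for m
    using f(1) g(1) by (auto simp: c_def words_def)
  moreover have "card {m \<in> A. c m = y} \<le> K \<and>
    card {m \<in> A. c m = y} * (t + 1) + card ({m \<in> A. c m \<in> hamming_sphere1 y} \<union> {m \<in> B. c m = y})
      \<le> 2 ^ t" if "y \<in> words n" for y
  proof -
    have fibres_A: "{m \<in> A. c m = y} = clean y" "{m \<in> A. c m \<in> hamming_sphere1 y} = nbrs y"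
      by (auto simp: c_def clean_def nbrs_def)
    have "{m \<in> B. c m = y} = {m \<in> B. fst (g m) = y}"
      using \<open>A \<inter> B = {}\<close> by (auto simp: c_def)
    then have "card {m \<in> B. c m = y} \<le> cap y"
      using card_fibre_le[OF g(2) g(1)] by simp
    moreover have "cap y + card (clean y) * (t + 1) + card (nbrs y) = 2 ^ t"
      using room[OF that] by (simp add: cap_def)
    ultimately show ?thesis
      unfolding fibres_A using clean_le[of y] card_Un_le[of "nbrs y" "{m \<in> B. c m = y}"]
      by linarith
  qed
  ultimately show ?thesis
    by blast
qed

definition received2 ::
  "'m set \<Rightarrow> 'm set \<Rightarrow> ('m \<Rightarrow> bool list) \<Rightarrow> ('m \<Rightarrow> bool list \<Rightarrow> bool list) \<Rightarrow> 'm
    \<Rightarrow> (bool list \<times> bool list) set" where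
  "received2 A B c d m = {(y, z). length y = length (c m) \<and> length z = length (d m y) \<and>
     (if m \<in> A then hamming_dist y (c m) + hamming_dist z (d m y) \<le> 1
      else m \<in> B \<and> y = c m \<and> z = d m y)}"

lemma received2_iff_received1:
  assumes "length (c m) = length y"
  shows "(y, z) \<in> received2 A B c d m \<longleftrightarrow>
    z \<in> received1 {m \<in> A. c m = y} ({m \<in> A. c m \<in> hamming_sphere1 y} \<union> {m \<in> B. c m = y}) (\<lambda>m. d m y) m"
proof (cases "m \<in> A \<and> c m \<noteq> y")
  case True
  then have "hamming_dist y (c m) \<noteq> 0"
    using assms hamming_dist_eq_0_iff by metis
  then have "hamming_dist y (c m) + hamming_dist z (d m y) \<le> 1 \<longleftrightarrow>
      hamming_dist y (c m) = 1 \<and> z = d m y" if "length z = length (d m y)"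
    using hamming_dist_eq_0_iff[OF that] by auto
  with True assms show ?thesis
    by (auto simp: received2_def received1_def hamming_sphere1_def hamming_dist_commute[of "c m"])
next
  case False
  then show ?thesis
    by (auto simp: received2_def received1_def hamming_ball1_def)
qed

lemma disjoint_received2:
  assumes c: "\<And>m. length (c m) = n"
    and disjoint: "\<And>y. y \<in> words n \<Longrightarrow> disjoint_family_on (received1 {m \<in> A. c m = y}
      ({m \<in> A. c m \<in> hamming_sphere1 y} \<union> {m \<in> B. c m = y}) (\<lambda>m. d m y)) UNIV"
  shows "disjoint_family_on (received2 A B c d) UNIV"
  unfolding disjoint_family_on_def
proof (intro ballI impI equals0I)
  fix m1 m2 yz
  assume "m1 \<noteq> m2" "yz \<in> received2 A B c d m1 \<inter> received2 A B c d m2"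
  then obtain y z where yz: "(y, z) \<in> received2 A B c d m1" "(y, z) \<in> received2 A B c d m2"
    by (cases yz) auto
  then have y: "y \<in> words n"
    using c by (simp add: received2_def words_def)
  with yz c have "z \<in> received1 {m \<in> A. c m = y} ({m \<in> A. c m \<in> hamming_sphere1 y} \<union> {m \<in> B. c m = y})
      (\<lambda>m. d m y) m" if "m \<in> {m1, m2}" for m
    using that by (auto simp: received2_iff_received1 words_def)
  with disjoint[OF y] \<open>m1 \<noteq> m2\<close> show False
    by (auto simp: disjoint_family_on_def)
qed

lemma two_block_packing:
  fixes A B :: "'m set"
  assumes "finite A" "finite B" "A \<inter> B = {}"
    and code: "single_error_correcting t C" "K \<le> card C"
    and fibres: "card A \<le> 2 ^ n * K" and load: "K * (n + t + 1) \<le> 2 ^ t"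
    and volume: "card A * (n + t + 1) + card B \<le> 2 ^ (n + t)"
  shows "\<exists>c d. (\<forall>m. length (c m) = n) \<and> (\<forall>m y. length (d m y) = t) \<and>
    disjoint_family_on (received2 A B c d) UNIV"
proof -
  define clean where "clean c y = {m \<in> A. c m = y}" for c :: "'m \<Rightarrow> bool list" and y
  define spent where "spent c y = {m \<in> A. c m \<in> hamming_sphere1 y} \<union> {m \<in> B. c m = y}"
    for c :: "'m \<Rightarrow> bool list" and y
  obtain c where c: "\<And>m. length (c m) = n"
    and c_fibres: "\<And>y. y \<in> words n \<Longrightarrow>
      card (clean c y) \<le> K \<and> card (clean c y) * (t + 1) + card (spent c y) \<le> 2 ^ t"
    using middle_block_assignment[OF assms(1-3) fibres load volume]
    unfolding clean_def spent_def by blast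
  have "\<exists>e. (\<forall>m. length (e m) = t) \<and> disjoint_family_on (received1 (clean c y) (spent c y) e) UNIV"
    if "y \<in> words n" for y
  proof (rule one_block_packing[OF _ _ code(1)])
    show "finite (clean c y)" "finite (spent c y)"
      using \<open>finite A\<close> \<open>finite B\<close> by (simp_all add: clean_def spent_def)
    show "card (clean c y) \<le> card C"
      using c_fibres[OF that] code(2) by linarith
    show "card (clean c y) * (t + 1) + card (spent c y) \<le> 2 ^ t"
      using c_fibres[OF that] by blast
  qed
  then obtain e where e: "\<forall>y\<in>words n.
      (\<forall>m. length (e y m) = t) \<and> disjoint_family_on (received1 (clean c y) (spent c y) (e y)) UNIV"
    by (metis bchoice)
  define d where "d m y = (if y \<in> words n then e y m else replicate t False)" for m y
  have "length (d m y) = t" for m y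
    using e by (simp add: d_def)
  moreover have "disjoint_family_on (received2 A B c d) UNIV"
    using c by (rule disjoint_received2) (use e in \<open>simp add: d_def clean_def spent_def\<close>)
  ultimately show ?thesis
    using c by blast
qed

section \<open>Three-block strategies\<close>

lemma sum_list_take_mono: "i \<le> j \<Longrightarrow> sum_list (take i xs) \<le> sum_list (take j (xs :: nat list))"
  using take_add[of i "j - i" xs] by simp

lemma block_start_eq:
  assumes "i < length bl" "sum_list (take i bl) \<le> j" "j < sum_list (take (Suc i) bl)"
  shows "block_start bl j = sum_list (take i bl)"
  unfolding block_start_def
proof (rule Max_eqI)
  show "finite {sum_list (take i bl) |i. i \<le> length bl \<and> sum_list (take i bl) \<le> j}"
    by simp
  show "sum_list (take i bl) \<in> {sum_list (take i bl) |i. i \<le> length bl \<and> sum_list (take i bl) \<le> j}"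
    using assms by auto
  fix s
  assume "s \<in> {sum_list (take i bl) |i. i \<le> length bl \<and> sum_list (take i bl) \<le> j}"
  then obtain i' where i': "s = sum_list (take i' bl)" "s \<le> j"
    by blast
  show "s \<le> sum_list (take i bl)"
  proof (cases "i' \<le> i")
    case True
    then show ?thesis
      using i' sum_list_take_mono by blast
  next
    case False
    then have "sum_list (take (Suc i) bl) \<le> s"
      unfolding i' by (intro sum_list_take_mono) simp
    with i' assms(3) show ?thesis
      by simp
  qed
qed

definition three_block_word ::
  "nat \<Rightarrow> nat \<Rightarrow> ('m \<Rightarrow> bool list) \<Rightarrow> ('m \<Rightarrow> bool list \<Rightarrow> bool list)
    \<Rightarrow> ('m \<Rightarrow> bool list \<Rightarrow> bool list \<Rightarrow> bool list) \<Rightarrow> 'm \<Rightarrow> bool list \<Rightarrow> bool list" where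
  "three_block_word n1 n2 e1 e2 e3 m y =
     e1 m @ e2 m (take n1 y) @ e3 m (take n1 y) (take n2 (drop n1 y))"

lemma three_block_word_block_start:
  assumes "length (e1 m) = n1" "\<And>y. length (e2 m y) = n2"
    and "length y = n1 + n2 + n3" "j < n1 + n2 + n3"
  shows "three_block_word n1 n2 e1 e2 e3 m (take (block_start [n1, n2, n3] j) y) ! j
    = three_block_word n1 n2 e1 e2 e3 m y ! j"
proof -
  consider "j < n1" | "n1 \<le> j" "j < n1 + n2" | "n1 + n2 \<le> j"
    by linarith
  then show ?thesis
  proof cases
    case 1
    then have "block_start [n1, n2, n3] j = 0"
      using block_start_eq[of 0 "[n1, n2, n3]" j] by simp
    with 1 assms show ?thesis
      by (simp add: three_block_word_def nth_append)
  next
    case 2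
    then have "block_start [n1, n2, n3] j = n1" "j - n1 < n2"
      using block_start_eq[of 1 "[n1, n2, n3]" j] by simp_all
    with 2 assms show ?thesis
      by (simp add: three_block_word_def nth_append)
  next
    case 3
    then have "block_start [n1, n2, n3] j = n1 + n2"
      using block_start_eq[of 2 "[n1, n2, n3]" j] assms(4) by (simp add: numeral_2_eq_2)
    then show ?thesis
      by (simp add: three_block_word_def drop_take)
  qed
qed

lemma reachable1_three_blocks:
  assumes "length (e1 m) = n1" "\<And>y. length (e2 m y) = n2" "\<And>y z. length (e3 m y z) = n3"
  shows "reachable1 [n1, n2, n3] (\<lambda>m p j. three_block_word n1 n2 e1 e2 e3 m p ! j) m y \<longleftrightarrow>
    length y = n1 + n2 + n3 \<and> hamming_dist y (three_block_word n1 n2 e1 e2 e3 m y) \<le> 1"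
proof (cases "length y = n1 + n2 + n3")
  case True
  let ?w = "three_block_word n1 n2 e1 e2 e3 m"
  have "?w (take (block_start [n1, n2, n3] j) y) ! j = ?w y ! j" if "j < length y" for j
    using three_block_word_block_start[where ?e1.0 = e1 and ?e2.0 = e2 and ?e3.0 = e3 and m = m,
        OF assms(1,2) True] True that
    by simp
  then have "{j. j < length y \<and> y ! j \<noteq> ?w (take (block_start [n1, n2, n3] j) y) ! j}
      = {j. j < length y \<and> y ! j \<noteq> ?w y ! j}"
    by (simp cong: conj_cong)
  moreover have "length (?w y) = length y"
    using assms True by (simp add: three_block_word_def)
  ultimately show ?thesis
    using True by (simp add: reachable1_def hamming_dist_conv_card)
next
  case False
  then show ?thesis
    by (simp add: reachable1_def)
qed

definition first_bit_class :: "nat \<Rightarrow> bool \<Rightarrow> nat set" where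
  "first_bit_class M b = {m. m < M \<and> (m < M div 2) = b}"

lemma card_first_bit_class:
  "card (first_bit_class M b) \<le> M - M div 2"
  "card (first_bit_class M b) + card (first_bit_class M (\<not> b)) = M"
proof -
  have "first_bit_class M True = {..<M div 2}" "first_bit_class M False = {M div 2..<M}"
    by (auto simp: first_bit_class_def)
  then show "card (first_bit_class M b) \<le> M - M div 2"
    "card (first_bit_class M b) + card (first_bit_class M (\<not> b)) = M"
    by (cases b; simp)+
qed

lemma first_bit_class_packing:
  fixes M n t K :: nat
  assumes code: "single_error_correcting t C" "K \<le> card C" and load: "K * (n + t + 1) \<le> 2 ^ t"
    and fibres: "M - M div 2 \<le> 2 ^ n * K"
    and volume: "(M - M div 2) * (n + t + 1) + M div 2 \<le> 2 ^ (n + t)"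
  shows "\<exists>c d. (\<forall>m. length (c m) = n) \<and> (\<forall>m y. length (d m y) = t) \<and>
    disjoint_family_on (received2 (first_bit_class M b) (first_bit_class M (\<not> b)) c d) UNIV"
proof (rule two_block_packing[OF _ _ _ code _ load])
  show "finite (first_bit_class M b)" "finite (first_bit_class M (\<not> b))"
    "first_bit_class M b \<inter> first_bit_class M (\<not> b) = {}"
    by (auto simp: first_bit_class_def)
  show "card (first_bit_class M b) \<le> 2 ^ n * K"
    using card_first_bit_class(1) fibres by (rule order_trans)
  have shift: "a * (s + 1) + a' \<le> h * (s + 1) + f" if "a \<le> h" "a + a' = h + f" for a a' h f s :: nat
  proof -
    have "a * s \<le> h * s"
      using that(1) by (rule mult_le_mono1)
    moreover have "a * (s + 1) = a * s + a" "h * (s + 1) = h * s + h"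
      by simp_all
    ultimately show ?thesis
      using that by linarith
  qed
  have "card (first_bit_class M b) * (n + t + 1) + card (first_bit_class M (\<not> b))
      \<le> (M - M div 2) * (n + t + 1) + M div 2"
    using card_first_bit_class[of M b] by (intro shift) auto
  then show "card (first_bit_class M b) * (n + t + 1) + card (first_bit_class M (\<not> b)) \<le> 2 ^ (n + t)"
    using volume by (rule order_trans)
qed

definition first_bit_enc ::
  "nat \<Rightarrow> nat \<Rightarrow> (bool \<Rightarrow> nat \<Rightarrow> bool list) \<Rightarrow> (bool \<Rightarrow> nat \<Rightarrow> bool list \<Rightarrow> bool list)
    \<Rightarrow> nat \<Rightarrow> bool list \<Rightarrow> nat \<Rightarrow> bool" where
  "first_bit_enc M n c d m p j =
     three_block_word 1 n (\<lambda>m. [m < M div 2]) (\<lambda>m y. c (hd y) m) (\<lambda>m y z. d (hd y) m z) m p ! j"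

lemma received2_of_reachable1:
  assumes "reachable1 [1, n, t] (first_bit_enc M n c d) m y" "m < M"
    and c: "\<And>b m. length (c b m) = n" and d: "\<And>b m y. length (d b m y) = t"
  shows "(take n (tl y), drop n (tl y))
    \<in> received2 (first_bit_class M (hd y)) (first_bit_class M (\<not> hd y)) (c (hd y)) (d (hd y)) m"
proof -
  have reach: "length y = 1 + n + t \<and> hamming_dist y
      (three_block_word 1 n (\<lambda>m. [m < M div 2]) (\<lambda>m y. c (hd y) m) (\<lambda>m y z. d (hd y) m z) m y) \<le> 1"
    using assms(1) unfolding first_bit_enc_def by (subst (asm) reachable1_three_blocks) (simp_all add: c d)
  then obtain b z where bz: "y = b # z" "length z = n + t"
    by (cases y) auto
  define y2 y3 where "y2 = take n z" and "y3 = drop n z"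
  have y: "y = b # y2 @ y3" "length y2 = n" "length y3 = t"
    using bz by (simp_all add: y2_def y3_def)
  with reach have "(if b = (m < M div 2) then 0 else 1) + hamming_dist y2 (c b m)
      + hamming_dist y3 (d b m y2) \<le> (1 :: nat)"
    using c d by (simp add: three_block_word_def hamming_dist_append)
  with y c d \<open>m < M\<close> show ?thesis
    by (auto simp: received2_def first_bit_class_def hamming_dist_eq_0_iff split: if_splits)
qed

lemma exists_three_block_strategy:
  fixes M n t K :: nat
  assumes "single_error_correcting t C" "K \<le> card C" "K * (n + t + 1) \<le> 2 ^ t"
    and "M - M div 2 \<le> 2 ^ n * K" "(M - M div 2) * (n + t + 1) + M div 2 \<le> 2 ^ (n + t)"
  shows "\<exists>enc. transmits_single_error [1, n, t] enc M"
proof -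
  obtain c d where cd: "\<And>b. (\<forall>m. length (c b m) = n) \<and> (\<forall>m y. length (d b m y) = t) \<and>
      disjoint_family_on (received2 (first_bit_class M b) (first_bit_class M (\<not> b)) (c b) (d b)) UNIV"
    using first_bit_class_packing[OF assms] by metis
  have "transmits_single_error [1, n, t] (first_bit_enc M n c d) M"
    unfolding transmits_single_error_def
  proof (intro allI impI notI)
    fix m1 m2
    assume m: "m1 < M" "m2 < M" "m1 \<noteq> m2"
      and "\<exists>y. reachable1 [1, n, t] (first_bit_enc M n c d) m1 y \<and>
        reachable1 [1, n, t] (first_bit_enc M n c d) m2 y"
    then obtain y where "reachable1 [1, n, t] (first_bit_enc M n c d) m1 y"
      "reachable1 [1, n, t] (first_bit_enc M n c d) m2 y"
      by blast
    with m cd have "(take n (tl y), drop n (tl y))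
        \<in> received2 (first_bit_class M (hd y)) (first_bit_class M (\<not> hd y)) (c (hd y)) (d (hd y)) m1
         \<inter> received2 (first_bit_class M (hd y)) (first_bit_class M (\<not> hd y)) (c (hd y)) (d (hd y)) m2"
      using received2_of_reachable1 by blast
    with cd m(3) show False
      by (auto simp: disjoint_family_on_def)
  qed
  then show ?thesis
    by blast
qed

section \<open>Achievability of M_ad\<close>

lemma M_ad_volume_bound:
  assumes "n \<ge> 1"
  shows "(M_ad n - M_ad n div 2) * n + M_ad n div 2 \<le> 2 ^ (n - 1)"
proof -
  define D where "D = 2 ^ n div (2 * (n + 1))"
  define R where "R = 2 ^ n mod (2 * (n + 1))"
  have pow: "(2 :: nat) ^ n = 2 * 2 ^ (n - 1)"
    using assms by (simp add: power_eq_if)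
  have split: "2 ^ n = 2 * (n + 1) * D + R"
    unfolding D_def R_def by (metis div_mult_mod_eq mult.commute)
  have "U n = 2 * D"
    by (simp add: U_def D_def)
  then have "rr n = 2 ^ n - (int n + 1) * (2 * int D)"
    by (simp add: rr_def)
  also have "(2 :: int) ^ n = 2 * (int n + 1) * int D + int R"
    using arg_cong[OF split, of int] by (simp add: algebra_simps)
  finally have "rr n = int R"
    by (simp add: algebra_simps)
  show ?thesis
  proof (cases "R < 2 * n")
    case True
    then have "M_ad n = 2 * D"
      using \<open>rr n = int R\<close> by (simp add: M_ad_def U_def D_def)
    moreover have "(n + 1) * D \<le> 2 ^ (n - 1)"
      using split pow by linarith
    ultimately show ?thesis
      by (simp add: algebra_simps)
  next
    case False
    then have "M_ad n = 2 * D + 1"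
      using \<open>rr n = int R\<close> by (simp add: M_ad_def U_def D_def)
    moreover have "(n + 1) * D + n \<le> 2 ^ (n - 1)"
      using split pow False by linarith
    ultimately show ?thesis
      by (simp add: algebra_simps)
  qed
qed

lemma quadratic_le_pow2: "9 \<le> k \<Longrightarrow> (2 * k + 1) * (2 * k + 2) \<le> (2 :: nat) ^ k"
proof (induction k rule: nat_induct_at_least)
  case base
  then show ?case
    by simp
next
  case (Suc k)
  have "9 * k \<le> k * k"
    using Suc(1) by (rule mult_le_mono1)
  moreover have "(2 * Suc k + 1) * (2 * Suc k + 2) = 4 * (k * k) + 14 * k + 12"
    "2 * ((2 * k + 1) * (2 * k + 2)) = 8 * (k * k) + 12 * k + 4"
    by (simp_all add: algebra_simps)
  ultimately have "(2 * Suc k + 1) * (2 * Suc k + 2) \<le> 2 * ((2 * k + 1) * (2 * k + 2))"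
    using Suc(1) by linarith
  also have "\<dots> \<le> 2 ^ Suc k"
    using Suc(2) by simp
  finally show ?case .
qed

lemma le_pow_mult_div_of_volume:
  fixes a f n n' t :: nat
  assumes "n = n' + t + 1" "a * n + f \<le> 2 ^ (n' + t)" "a \<le> f + 1" "n * (n + 1) \<le> 2 ^ t"
  shows "a \<le> 2 ^ n' * (2 ^ t div n)"
proof (rule ccontr)
  define P K r where "P = (2 :: nat) ^ n'" and "K = 2 ^ t div n" and "r = 2 ^ t mod n"
  assume "\<not> a \<le> 2 ^ n' * (2 ^ t div n)"
  then have "P * K + 1 \<le> a"
    by (simp add: P_def K_def)
  then have "(P * K + 1) * (n + 1) \<le> a * (n + 1)"
    by (rule mult_le_mono1)
  moreover have "a * (n + 1) \<le> P * 2 ^ t + 1"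
    using assms(1-3) by (simp add: P_def power_add algebra_simps)
  moreover have pow_t: "2 ^ t = n * K + r" "r < n"
    using assms(1) unfolding K_def r_def by (metis div_mult_mod_eq mult.commute, simp)
  ultimately have "P * K + n \<le> P * r"
    by (simp add: algebra_simps)
  moreover have "n < K"
  proof (rule ccontr)
    assume "\<not> n < K"
    then have "n * K \<le> n * n"
      by (intro mult_le_mono2) simp
    moreover have "n * n + n \<le> n * K + r"
      using assms(4) pow_t(1) by (simp add: algebra_simps)
    ultimately show False
      using pow_t(2) by linarith
  qed
  then have "P * n < P * K"
    by (simp add: P_def)
  moreover have "P * r < P * n"
    using pow_t(2) by (simp add: P_def)
  ultimately show False
    by linarith
qed

definition achievable_two_feedbacks :: "nat \<Rightarrow> nat \<Rightarrow> bool" where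
  "achievable_two_feedbacks n M \<longleftrightarrow>
     (\<exists>bl enc. length bl = 3 \<and> sum_list bl = n \<and> transmits_single_error bl enc M)"

lemma M_ad_achievable_of_code:
  assumes n: "n = 1 + n' + t" and code: "single_error_correcting t C" "K \<le> card C"
    and load: "K * n \<le> 2 ^ t" and fibres: "M_ad n - M_ad n div 2 \<le> 2 ^ n' * K"
  shows "achievable_two_feedbacks n (M_ad n)"
proof -
  have n': "n' + t + 1 = n" "n' + t = n - 1"
    using n by simp_all
  have "(M_ad n - M_ad n div 2) * (n' + t + 1) + M_ad n div 2 \<le> 2 ^ (n' + t)"
    using M_ad_volume_bound[of n] n' by simp
  moreover have "K * (n' + t + 1) \<le> 2 ^ t"
    using load n' by simp
  ultimately obtain enc where "transmits_single_error [1, n', t] enc (M_ad n)"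
    using exists_three_block_strategy[OF code _ fibres] by blast
  then show ?thesis
    unfolding achievable_two_feedbacks_def using n' by (intro exI[of _ "[1, n', t]"]) auto
qed

lemma M_ad_achievable_of_vt_code:
  assumes "n = 1 + n' + t" "t \<ge> 1" "K * n \<le> 2 ^ t" "2 * t * K \<le> 2 ^ t"
    and "M_ad n - M_ad n div 2 \<le> 2 ^ n' * K"
  shows "achievable_two_feedbacks n (M_ad n)"
proof -
  obtain C where C: "single_error_correcting t C" "2 ^ t \<le> 2 * t * card C"
    using exists_vt_code[OF assms(2)] by blast
  have "2 * t * K \<le> 2 * t * card C"
    using assms(4) C(2) by linarith
  then have "K \<le> card C"
    using assms(2) by simp
  then show ?thesis
    by (rule M_ad_achievable_of_code[OF assms(1) C(1) _ assms(3,5)])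
qed

lemma M_ad_achievable_large:
  assumes "n \<ge> 18"
  shows "achievable_two_feedbacks n (M_ad n)"
proof -
  define t where "t = n div 2"
  define K where "K = 2 ^ t div n"
  have n: "n = 1 + (n - 1 - t) + t" "n - 1 - t + t + 1 = n" "n - 1 - t + t = n - 1"
    and t: "2 * t \<le> n" "n \<le> 2 * t + 1" "9 \<le> t"
    using assms by (auto simp: t_def)
  have "n * (n + 1) \<le> (2 * t + 1) * (2 * t + 2)"
    using t(2) by (intro mult_le_mono) auto
  also have "\<dots> \<le> 2 ^ t"
    using t(3) by (rule quadratic_le_pow2)
  finally have big: "n * (n + 1) \<le> 2 ^ t" .
  have load: "K * n \<le> 2 ^ t"
    by (simp add: K_def)
  have "2 * t * K \<le> n * K"
    using t(1) by (rule mult_le_mono1)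
  also have "\<dots> \<le> 2 ^ t"
    using load by (simp add: mult.commute)
  finally have code: "2 * t * K \<le> 2 ^ t" .
  have "M_ad n - M_ad n div 2 \<le> 2 ^ (n - 1 - t) * K"
    unfolding K_def
  proof (rule le_pow_mult_div_of_volume[OF n(2)[symmetric] _ _ big])
    show "(M_ad n - M_ad n div 2) * n + M_ad n div 2 \<le> 2 ^ (n - 1 - t + t)"
      using M_ad_volume_bound[of n] assms n(3) by simp
    show "M_ad n - M_ad n div 2 \<le> M_ad n div 2 + 1"
      by simp
  qed
  with n(1) t(3) load code show ?thesis
    by (intro M_ad_achievable_of_vt_code) auto
qed

lemma M_ad_achievable_small:
  assumes "1 \<le> n" "n \<le> 17"
  shows "achievable_two_feedbacks n (M_ad n)"
proof -
  have uncoded: "achievable_two_feedbacks n (M_ad n)"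
    if "n = 1 + n' + t" "n \<le> 2 ^ t" "M_ad n - M_ad n div 2 \<le> 2 ^ n'" for n n' t
    using that by (intro M_ad_achievable_of_code[where C = "{replicate t False}" and K = 1])
      (auto simp: single_error_correcting_def words_def)
  note M_ad_simps = M_ad_def rr_def U_def
  have "achievable_two_feedbacks 1 (M_ad 1)"
    by (rule uncoded[of _ 0 0]) (simp_all add: M_ad_simps)
  moreover have "achievable_two_feedbacks 2 (M_ad 2)"
    by (rule uncoded[of _ 0 1]) (simp_all add: M_ad_simps)
  moreover have "achievable_two_feedbacks 3 (M_ad 3)"
    by (rule uncoded[of _ 0 2]) (simp_all add: M_ad_simps)
  moreover have "achievable_two_feedbacks 4 (M_ad 4)"
    by (rule uncoded[of _ 1 2]) (simp_all add: M_ad_simps)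
  moreover have "achievable_two_feedbacks 5 (M_ad 5)"
    by (rule uncoded[of _ 1 3]) (simp_all add: M_ad_simps)
  moreover have "achievable_two_feedbacks 6 (M_ad 6)"
    by (rule uncoded[of _ 2 3]) (simp_all add: M_ad_simps)
  moreover have "achievable_two_feedbacks 7 (M_ad 7)"
    by (rule uncoded[of _ 3 3]) (simp_all add: M_ad_simps)
  moreover have "achievable_two_feedbacks 8 (M_ad 8)"
    by (rule uncoded[of _ 4 3]) (simp_all add: M_ad_simps)
  moreover have "achievable_two_feedbacks 9 (M_ad 9)"
    by (rule M_ad_achievable_of_code[of _ 2 6 "set code6" 7])
      (simp_all add: single_error_correcting_code6 M_ad_simps)
  moreover have "achievable_two_feedbacks 10 (M_ad 10)"
    by (rule M_ad_achievable_of_vt_code[of _ 4 5 3]) (simp_all add: M_ad_simps)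
  moreover have "achievable_two_feedbacks 11 (M_ad 11)"
    by (rule M_ad_achievable_of_code[of _ 3 7 "set code7" 11])
      (simp_all add: single_error_correcting_code7 M_ad_simps)
  moreover have "achievable_two_feedbacks 12 (M_ad 12)"
    by (rule M_ad_achievable_of_vt_code[of _ 5 6 5]) (simp_all add: M_ad_simps)
  moreover have "achievable_two_feedbacks 13 (M_ad 13)"
    by (rule M_ad_achievable_of_code[of _ 4 8 "set code8" 19])
      (simp_all add: single_error_correcting_code8 M_ad_simps)
  moreover have "achievable_two_feedbacks 14 (M_ad 14)"
    by (rule M_ad_achievable_of_vt_code[of _ 6 7 9]) (simp_all add: M_ad_simps)
  moreover have "achievable_two_feedbacks 15 (M_ad 15)"
    by (rule uncoded[of _ 10 4]) (simp_all add: M_ad_simps)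
  moreover have "achievable_two_feedbacks 16 (M_ad 16)"
    by (rule uncoded[of _ 11 4]) (simp_all add: M_ad_simps)
  moreover have "achievable_two_feedbacks 17 (M_ad 17)"
    by (rule M_ad_achievable_of_vt_code[of _ 8 8 15]) (simp_all add: M_ad_simps)
  moreover have "n = 1 \<or> n = 2 \<or> n = 3 \<or> n = 4 \<or> n = 5 \<or> n = 6 \<or> n = 7 \<or> n = 8 \<or> n = 9 \<or>
      n = 10 \<or> n = 11 \<or> n = 12 \<or> n = 13 \<or> n = 14 \<or> n = 15 \<or> n = 16 \<or> n = 17"
    using assms by presburger
  ultimately show ?thesis
    by fastforce
qed

theorem theorem4:
  fixes n :: nat
  assumes "n \<ge> 1"
  shows "\<exists>bl enc. length bl = 3 \<and> sum_list bl = n \<and> transmits_single_error bl enc (M_ad n)"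
proof -
  have "achievable_two_feedbacks n (M_ad n)"
  proof (cases "n \<ge> 18")
    case True
    then show ?thesis
      by (rule M_ad_achievable_large)
  next
    case False
    with assms show ?thesis
      by (intro M_ad_achievable_small) auto
  qed
  then show ?thesis
    by (simp add: achievable_two_feedbacks_def)
qed

end
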